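(* The relation $\equiv_m$ of $m$-equivalence on $2^\mathbb{N}$ is $\Pi^0_2$-graphable with diameter $2$.
   Context: Subsets of $\mathbb{N}$ are identified with elements of $2^\mathbb{N}$. An $m$-reduction from $A$ to $B$ is a total computable $f:\mathbb{N}\to\mathbb{N}$ with $n\in A\iff f(n)\in B$ for all $n$; $A\le_m B$ if one exists, and $A\equiv_m B$ iff $A\le_m B$ and $B\le_m A$. An equivalence relation $E$ on a space $X$ is $\Gamma$-graphable (for a pointclass $\Gamma$, here lightface $\Pi^0_2$) if there is a simple undirected graph $G\subseteq X\times X$ in $\Gamma$ whose connectedness relation equals $E$; it is $\Gamma$-graphable with diameter $k$ if such a $G$ exists in which $k$ is the least integer such that any two $G$-connected points are joined by a path of length at most $k$. *)

theory Defs
  imports Main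
begin

text \<open>A function of arity n is a function on
nat lists; only its values on lists of length n matter.\<close>

inductive total_rec :: "nat \<Rightarrow> (nat list \<Rightarrow> nat) \<Rightarrow> bool" where
  zero: "total_rec n (\<lambda>xs. 0)"
| succ: "total_rec 1 (\<lambda>xs. Suc (hd xs))"
| proj: "i < n \<Longrightarrow> total_rec n (\<lambda>xs. xs ! i)"
| comp: "total_rec m f \<Longrightarrow> length gs = m \<Longrightarrow> (\<forall>i<m. total_rec n (gs ! i))
          \<Longrightarrow> total_rec n (\<lambda>xs. f (map (\<lambda>g. g xs) gs))"
| prim: "total_rec n g \<Longrightarrow> total_rec (Suc (Suc n)) h
          \<Longrightarrow> total_rec (Suc n)
                (\<lambda>xs. rec_nat (g (tl xs)) (\<lambda>k r. h (k # r # tl xs)) (hd xs))"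
| mini: "total_rec (Suc n) g \<Longrightarrow> (\<forall>xs. length xs = n \<longrightarrow> (\<exists>y. g (y # xs) = 0))
          \<Longrightarrow> total_rec n (\<lambda>xs. LEAST y. g (y # xs) = 0)"
| ext: "total_rec n f \<Longrightarrow> (\<forall>xs. length xs = n \<longrightarrow> f xs = f' xs) \<Longrightarrow> total_rec n f'"

definition computable :: "(nat \<Rightarrow> nat) \<Rightarrow> bool" where
  "computable f \<longleftrightarrow> total_rec 1 (\<lambda>xs. f (hd xs))"

definition m_reduces :: "(nat \<Rightarrow> bool) \<Rightarrow> (nat \<Rightarrow> bool) \<Rightarrow> bool" where
  "m_reduces A B \<longleftrightarrow> (\<exists>f. computable f \<and> (\<forall>n. A n \<longleftrightarrow> B (f n)))"

definition m_equiv :: "(nat \<Rightarrow> bool) \<Rightarrow> (nat \<Rightarrow> bool) \<Rightarrow> bool" where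
  "m_equiv A B \<longleftrightarrow> m_reduces A B \<and> m_reduces B A"

text \<open>Code of the initial segment X restricted to {0..<m}, as a natural number
(injective coding of finite binary strings).\<close>

definition prefix_code :: "(nat \<Rightarrow> bool) \<Rightarrow> nat \<Rightarrow> nat" where
  "prefix_code X m = 2 ^ m + (\<Sum>i<m. if X i then 2 ^ i else 0)"

text \<open>Lightface Pi^0_2 subsets of 2^N x 2^N, in normal form:
(X,Y) in P iff for all n there is m with R(n, X|m, Y|m), R computable.\<close>

definition Pi02_pairs :: "((nat \<Rightarrow> bool) \<times> (nat \<Rightarrow> bool)) set \<Rightarrow> bool" where
  "Pi02_pairs P \<longleftrightarrow> (\<exists>r. total_rec 3 r \<and>
     (\<forall>X Y. (X, Y) \<in> P \<longleftrightarrow>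
        (\<forall>n. \<exists>m. r [n, prefix_code X m, prefix_code Y m] = 0)))"

definition simple_graph :: "'a rel \<Rightarrow> bool" where
  "simple_graph G \<longleftrightarrow> sym G \<and> irrefl G"

definition diam_bounded :: "'a rel \<Rightarrow> nat \<Rightarrow> bool" where
  "diam_bounded G k \<longleftrightarrow> (\<forall>x y. (x, y) \<in> G\<^sup>* \<longrightarrow> (\<exists>j\<le>k. (x, y) \<in> G ^^ j))"

definition has_diameter :: "'a rel \<Rightarrow> nat \<Rightarrow> bool" where
  "has_diameter G k \<longleftrightarrow> diam_bounded G k \<and> (\<forall>k'<k. \<not> diam_bounded G k')"

definition Pi02_graphable_diam ::
  "((nat \<Rightarrow> bool) \<Rightarrow> (nat \<Rightarrow> bool) \<Rightarrow> bool) \<Rightarrow> nat \<Rightarrow> bool" where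
  "Pi02_graphable_diam E k \<longleftrightarrow> (\<exists>G. Pi02_pairs G \<and> simple_graph G
      \<and> G\<^sup>* = {(x, y). E x y} \<and> has_diameter G k)"

end

(* Place m-equivalent sets A and B and the initial segment {0..<h} on the residue classes
   0, 1, 2 mod 3, where h codes programs computing m-reductions between A and B.  As A is
   nontrivial, this join C reduces to A (the second column through the reduction, the third
   by constant answers), so C is m-equivalent to A and to B.  The graph joins X and C whenever
   C has this form with X among its first two columns.  Adjacent sets are therefore
   m-equivalent, distinct m-equivalent A and B have a common neighbour (padding h keeps C
   different from both), and {1}, {2} are m-equivalent but not adjacent, since neither is
   such a join: the diameter is exactly 2.  The edge relation is Pi^0_2 because programs are
   run by a universal interpreter whose computations have finite, decidably checkable
   certificates, so being a join for X says that for every n some finite prefix certifies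
   the first n instances. *)

theory Submission
  imports Defs "HOL-Library.Nat_Bijection"
begin

section \<open>The Kleene class\<close>

lemma total_rec_cong: "total_rec n f \<Longrightarrow> (\<And>xs. length xs = n \<Longrightarrow> f xs = g xs) \<Longrightarrow> total_rec n g"
  using total_rec.ext by blast

lemma total_rec_comp1:
  assumes "total_rec 1 (\<lambda>ys. f (hd ys))" "total_rec n g"
  shows "total_rec n (\<lambda>xs. f (g xs))"
  using total_rec.comp[of 1 "\<lambda>ys. f (hd ys)" "[g]" n] assms by simp

lemma total_rec_comp2:
  assumes "total_rec 2 (\<lambda>ys. f (ys!0) (ys!1))" "total_rec n g" "total_rec n h"
  shows "total_rec n (\<lambda>xs. f (g xs) (h xs))"
proof -
  have "\<forall>i<2. total_rec n ([g, h] ! i)"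
    using assms(2,3) by (auto simp: less_2_cases_iff)
  then show ?thesis
    using total_rec.comp[of 2 "\<lambda>ys. f (ys!0) (ys!1)" "[g, h]" n] assms(1) by simp
qed

lemma total_rec_hd: "total_rec 1 hd"
  by (rule total_rec_cong[OF total_rec.proj[of 0 1]]) (auto simp: length_Suc_conv)

lemma total_rec_const: "total_rec n (\<lambda>xs. c)"
proof (induction c)
  case 0
  show ?case by (rule total_rec.zero)
next
  case (Suc c)
  then show ?case using total_rec_comp1[OF total_rec.succ] by blast
qed

lemma total_rec_recI:
  assumes "total_rec n g" "total_rec m h" "m = Suc (Suc n)" "k = Suc n"
    "\<And>xs. length xs = k \<Longrightarrow> rec_nat (g (tl xs)) (\<lambda>k r. h (k # r # tl xs)) (hd xs) = F xs"
  shows "total_rec k F"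
  using total_rec_cong[OF total_rec.prim[OF assms(1)] assms(5)] assms(2-4) by blast

lemma total_rec_LeastI:
  assumes "total_rec m g" "m = Suc n" "\<And>xs. length xs = n \<Longrightarrow> \<exists>y. g (y # xs) = 0"
    "\<And>xs. length xs = n \<Longrightarrow> (LEAST y. g (y # xs) = 0) = F xs"
  shows "total_rec n F"
  using total_rec_cong[OF total_rec.mini[of n g] assms(4)] assms(1-3) by blast

lemma length_2_conv: "length xs = 2 \<longleftrightarrow> (\<exists>a b. xs = [a, b])"
  by (auto simp: numeral_2_eq_2 length_Suc_conv)

lemma total_rec_add: "total_rec 2 (\<lambda>ys. ys!0 + ys!1)"
proof -
  have step: "total_rec 3 (\<lambda>zs. Suc (zs!1))"
    using total_rec_comp1[OF total_rec.succ total_rec.proj[of 1 3]] by simp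
  have rec: "rec_nat b (\<lambda>k r. Suc r) a = a + b" for a b :: nat
    by (induction a) auto
  show ?thesis
    by (rule total_rec_recI[OF total_rec_hd step]) (auto simp: length_2_conv rec)
qed

lemma total_rec_triangle: "total_rec 1 (\<lambda>ys. triangle (hd ys))"
proof -
  have step: "total_rec 2 (\<lambda>zs. zs!1 + Suc (zs!0))"
    using total_rec_comp2[OF total_rec_add total_rec.proj[of 1 2]
        total_rec_comp1[OF total_rec.succ total_rec.proj[of 0 2]]] by simp
  have rec: "rec_nat 0 (\<lambda>k r. Suc (r + k)) a = triangle a" for a
    by (induction a) auto
  show ?thesis
    by (rule total_rec_recI[OF total_rec.zero[of 0] step]) (auto simp: rec)
qed

lemma total_rec_diff: "total_rec 2 (\<lambda>ys. ys!0 - ys!1)"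
proof -
  have rec_pred: "rec_nat 0 (\<lambda>k r. k) a = a - 1" for a :: nat
    by (induction a) auto
  have "total_rec 1 (\<lambda>ys. hd ys - 1)"
    by (rule total_rec_recI[OF total_rec.zero[of 0] total_rec.proj[of 0 2]]) (auto simp: rec_pred)
  then have step: "total_rec 3 (\<lambda>zs. zs!1 - 1)"
    using total_rec_comp1[OF _ total_rec.proj[of 1 3], where f="\<lambda>x. x - 1"] by simp
  have rec_diff: "rec_nat b (\<lambda>k r. r - Suc 0) a = b - a" for a b :: nat
    by (induction a) auto
  have "total_rec 2 (\<lambda>ys. ys!1 - ys!0)"
    by (rule total_rec_recI[OF total_rec_hd step]) (auto simp: length_2_conv rec_diff)
  from total_rec_comp2[OF this total_rec.proj[of 1 2] total_rec.proj[of 0 2]] show ?thesis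
    by simp
qed

definition cpair :: "nat \<Rightarrow> nat \<Rightarrow> nat" where "cpair a b = prod_encode (a, b)"
definition cfst :: "nat \<Rightarrow> nat" where "cfst p = fst (prod_decode p)"
definition csnd :: "nat \<Rightarrow> nat" where "csnd p = snd (prod_decode p)"

lemma cfst_cpair [simp]: "cfst (cpair a b) = a"
  by (simp add: cfst_def cpair_def)

lemma csnd_cpair [simp]: "csnd (cpair a b) = b"
  by (simp add: csnd_def cpair_def)

lemma cpair_eq_iff [simp]: "cpair a b = cpair c d \<longleftrightarrow> a = c \<and> b = d"
  by (metis cfst_cpair csnd_cpair)

lemma total_rec_cpair: "total_rec 2 (\<lambda>ys. cpair (ys!0) (ys!1))"
proof -
  have "total_rec 2 (\<lambda>ys. triangle (ys!0 + ys!1))"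
    using total_rec_comp1[OF total_rec_triangle total_rec_add] .
  then have "total_rec 2 (\<lambda>ys. triangle (ys!0 + ys!1) + ys!0)"
    using total_rec_comp2[where f="(+)", OF total_rec_add _ total_rec.proj[of 0 2]] by simp
  then show ?thesis
    by (simp add: cpair_def prod_encode_def)
qed

text \<open>Both projections are computed by subtraction from the diagonal on which a code lies.\<close>

definition cantor_diag :: "nat \<Rightarrow> nat" where
  "cantor_diag p = (LEAST k. p < triangle (Suc k))"

lemma triangle_mono: "a \<le> b \<Longrightarrow> triangle a \<le> triangle b"
  by (induction b) (auto simp: le_Suc_eq)

lemma cantor_diag_triangle_add: "cantor_diag (triangle (m + n) + m) = m + n"
  unfolding cantor_diag_def
proof (rule Least_equality)
  fix y
  assume "triangle (m + n) + m < triangle (Suc y)"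
  then have "\<not> triangle (Suc y) \<le> triangle (m + n)"
    by simp
  then show "m + n \<le> y"
    using triangle_mono[of "Suc y" "m + n"] by linarith
qed simp

lemma cfst_eq: "cfst p = p - triangle (cantor_diag p)"
  and csnd_eq: "csnd p = cantor_diag p - (p - triangle (cantor_diag p))"
proof -
  obtain m n where "prod_decode p = (m, n)"
    by (cases "prod_decode p")
  moreover from this have "p = prod_encode (m, n)"
    by (metis prod_decode_inverse)
  ultimately show "cfst p = p - triangle (cantor_diag p)"
    and "csnd p = cantor_diag p - (p - triangle (cantor_diag p))"
    by (simp_all add: cfst_def csnd_def cantor_diag_triangle_add prod_encode_def)
qed

lemma total_rec_cantor_diag: "total_rec 1 (\<lambda>ys. cantor_diag (hd ys))"
proof -
  have suc1: "total_rec 2 (\<lambda>ys. Suc (ys!1))" and suc0: "total_rec 2 (\<lambda>ys. Suc (ys!0))"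
    using total_rec_comp1[OF total_rec.succ total_rec.proj[of _ 2]] by simp_all
  have search: "total_rec 2 (\<lambda>ys. Suc (ys!1) - triangle (Suc (ys!0)))"
    using total_rec_comp2[where f="(-)", OF total_rec_diff suc1
        total_rec_comp1[where f=triangle, OF total_rec_triangle suc0]] by simp
  have triangle_ge: "Suc p \<le> triangle (Suc p)" for p
    by (induction p) auto
  show ?thesis
  proof (rule total_rec_LeastI[OF search])
    fix xs :: "nat list"
    assume "length xs = 1"
    then obtain p where xs: "xs = [p]"
      by (auto simp: length_Suc_conv)
    show "\<exists>y. Suc ((y # xs)!1) - triangle (Suc ((y # xs)!0)) = 0"
      using triangle_ge[of p] by (intro exI[of _ p]) (simp add: xs)
    show "(LEAST y. Suc ((y # xs)!1) - triangle (Suc ((y # xs)!0)) = 0) = cantor_diag (hd xs)"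
      by (simp add: xs cantor_diag_def less_Suc_eq_le)
  qed simp
qed

section \<open>Computable unary functions and decidable predicates\<close>

lemma computable_cong:
  assumes "computable f" "\<And>x. f x = g x"
  shows "computable g"
proof -
  have "f = g"
    by (rule HOL.ext) (rule assms(2))
  with assms(1) show ?thesis
    by simp
qed

lemma computable_id: "computable (\<lambda>x. x)"
  unfolding computable_def by (rule total_rec_hd)

lemma computable_const: "computable (\<lambda>x. c)"
  unfolding computable_def by (rule total_rec_const)

lemma computable_comp: "computable f \<Longrightarrow> computable g \<Longrightarrow> computable (\<lambda>x. f (g x))"
  unfolding computable_def using total_rec_comp1 by blast

lemma computable_comp2:
  "total_rec 2 (\<lambda>ys. F (ys!0) (ys!1)) \<Longrightarrow> computable a \<Longrightarrow> computable b \<Longrightarrow>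
    computable (\<lambda>x. F (a x) (b x))"
  unfolding computable_def using total_rec_comp2 by blast

lemma computable_Suc: "computable f \<Longrightarrow> computable (\<lambda>x. Suc (f x))"
  unfolding computable_def using total_rec_comp1[OF total_rec.succ] by blast

lemma computable_add: "computable f \<Longrightarrow> computable g \<Longrightarrow> computable (\<lambda>x. f x + g x)"
  using computable_comp2[where F="(+)", OF total_rec_add] by blast

lemma computable_diff: "computable f \<Longrightarrow> computable g \<Longrightarrow> computable (\<lambda>x. f x - g x)"
  using computable_comp2[where F="(-)", OF total_rec_diff] by blast

lemma computable_cpair: "computable f \<Longrightarrow> computable g \<Longrightarrow> computable (\<lambda>x. cpair (f x) (g x))"
  using computable_comp2[where F=cpair, OF total_rec_cpair] by blast

lemma computable_triangle: "computable f \<Longrightarrow> computable (\<lambda>x. triangle (f x))"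
  using computable_comp[where f=triangle] total_rec_triangle unfolding computable_def by blast

lemma computable_cantor_diag: "computable f \<Longrightarrow> computable (\<lambda>x. cantor_diag (f x))"
  using computable_comp[where f=cantor_diag] total_rec_cantor_diag unfolding computable_def by blast

lemma computable_cfst: "computable f \<Longrightarrow> computable (\<lambda>x. cfst (f x))"
  unfolding cfst_eq by (intro computable_diff computable_triangle computable_cantor_diag)

lemma computable_csnd: "computable f \<Longrightarrow> computable (\<lambda>x. csnd (f x))"
  unfolding csnd_eq by (intro computable_diff computable_triangle computable_cantor_diag)

lemma computable_rec_nat:
  assumes "computable (\<lambda>q. H (cfst q) (cfst (csnd q)) (csnd (csnd q)))" "computable G"
    "computable a" "computable b"
  shows "computable (\<lambda>x. rec_nat (G (b x)) (\<lambda>k r. H k r (b x)) (a x))"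
proof -
  have "total_rec 3 (\<lambda>zs. cpair (zs!0) (cpair (zs!1) (zs!2)))"
    using total_rec_comp2[where f=cpair, OF total_rec_cpair total_rec.proj[of 0 3]
        total_rec_comp2[where f=cpair, OF total_rec_cpair total_rec.proj[of 1 3] total_rec.proj[of 2 3]]]
    by simp
  from total_rec_comp1[OF assms(1)[unfolded computable_def] this]
  have step: "total_rec 3 (\<lambda>zs. H (zs!0) (zs!1) (zs!2))"
    by simp
  have "total_rec 2 (\<lambda>ys. rec_nat (G (ys!1)) (\<lambda>k r. H k r (ys!1)) (ys!0))"
    by (rule total_rec_recI[OF assms(2)[unfolded computable_def] step]) (auto simp: length_2_conv)
  from computable_comp2[OF this assms(3,4)] show ?thesis .
qed

lemma computable_mult: "computable f \<Longrightarrow> computable g \<Longrightarrow> computable (\<lambda>x. f x * g x)"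
proof -
  assume fg: "computable f" "computable g"
  have "computable (\<lambda>x. rec_nat ((\<lambda>_. 0) (g x)) (\<lambda>k r. (\<lambda>k r y. r + y) k r (g x)) (f x))"
    by (rule computable_rec_nat)
      (auto intro!: fg computable_add computable_cfst computable_csnd computable_id computable_const)
  moreover have "rec_nat 0 (\<lambda>k r. r + c) a = a * c" for a c :: nat
    by (induction a) auto
  ultimately show ?thesis by simp
qed

lemma computable_power: "computable f \<Longrightarrow> computable g \<Longrightarrow> computable (\<lambda>x. f x ^ g x)"
proof -
  assume fg: "computable f" "computable g"
  have "computable (\<lambda>x. rec_nat ((\<lambda>_. 1) (f x)) (\<lambda>k r. (\<lambda>k r y. r * y) k r (f x)) (g x))"
    by (rule computable_rec_nat)
      (auto intro!: fg computable_mult computable_cfst computable_csnd computable_id computable_const)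
  moreover have "rec_nat 1 (\<lambda>k r. r * c) a = c ^ a" for a c :: nat
    by (induction a) (simp_all add: power_Suc2)
  ultimately show ?thesis by simp
qed

lemma computable_funpow:
  "computable f \<Longrightarrow> computable a \<Longrightarrow> computable b \<Longrightarrow> computable (\<lambda>x. (f ^^ a x) (b x))"
proof -
  assume fab: "computable f" "computable a" "computable b"
  have "computable (\<lambda>x. rec_nat ((\<lambda>y. y) (b x)) (\<lambda>k r. (\<lambda>k r y. f r) k r (b x)) (a x))"
    by (rule computable_rec_nat)
      (auto intro!: fab computable_comp[OF fab(1)] computable_cfst computable_csnd computable_id)
  moreover have "rec_nat y (\<lambda>k r. f r) n = (f ^^ n) y" for y n
    by (induction n) auto
  ultimately show ?thesis by simp
qed

definition decidable :: "(nat \<Rightarrow> bool) \<Rightarrow> bool" where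
  "decidable P \<longleftrightarrow> computable (\<lambda>x. if P x then 1 else 0)"

lemma decidableI: "computable f \<Longrightarrow> (\<And>x. f x = (if P x then 1 else 0)) \<Longrightarrow> decidable P"
  unfolding decidable_def by (rule computable_cong)

lemma computable_If:
  assumes "decidable P" "computable a" "computable b"
  shows "computable (\<lambda>x. if P x then a x else b x)"
proof (rule computable_cong)
  show "computable (\<lambda>x. (if P x then 1 else 0) * a x + (1 - (if P x then 1 else 0)) * b x)"
    using assms unfolding decidable_def by (intro computable_add computable_mult computable_diff
        computable_const)
qed simp

lemma decidable_eq:
  assumes "computable f" "computable g"
  shows "decidable (\<lambda>x. f x = g x)"
  by (rule decidableI[where f="\<lambda>x. 1 - ((f x - g x) + (g x - f x))"])
    (intro computable_add computable_diff computable_const assms, simp)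

lemma decidable_less:
  assumes "computable f" "computable g"
  shows "decidable (\<lambda>x. f x < g x)"
  by (rule decidableI[where f="\<lambda>x. 1 - (1 - (g x - f x))"])
    (intro computable_diff computable_const assms, simp)

lemma decidable_le:
  assumes "computable f" "computable g"
  shows "decidable (\<lambda>x. f x \<le> g x)"
  by (rule decidableI[where f="\<lambda>x. 1 - (f x - g x)"])
    (intro computable_diff computable_const assms, simp)

lemma decidable_not: "decidable P \<Longrightarrow> decidable (\<lambda>x. \<not> P x)"
  unfolding decidable_def
  by (rule computable_cong[where f="\<lambda>x. 1 - (if P x then 1 else 0)"])
    (intro computable_diff computable_const, assumption, simp)

lemma decidable_conj: "decidable P \<Longrightarrow> decidable Q \<Longrightarrow> decidable (\<lambda>x. P x \<and> Q x)"
  unfolding decidable_def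
  by (rule computable_cong[where f="\<lambda>x. (if P x then 1 else 0) * (if Q x then 1 else 0)"])
    (intro computable_mult, assumption+, simp)

lemma decidable_disj: "decidable P \<Longrightarrow> decidable Q \<Longrightarrow> decidable (\<lambda>x. P x \<or> Q x)"
  using decidable_not[OF decidable_conj[OF decidable_not decidable_not]] by simp

lemma decidable_imp: "decidable P \<Longrightarrow> decidable Q \<Longrightarrow> decidable (\<lambda>x. P x \<longrightarrow> Q x)"
  using decidable_disj[OF decidable_not] by simp

lemma decidable_iff: "decidable P \<Longrightarrow> decidable Q \<Longrightarrow> decidable (\<lambda>x. P x \<longleftrightarrow> Q x)"
  using decidable_conj[OF decidable_imp decidable_imp] by (simp add: iff_conv_conj_imp)

lemma computable_Least:
  assumes "decidable (\<lambda>p. P (cfst p) (csnd p))" and "\<And>x. \<exists>y. P y x"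
  shows "computable (\<lambda>x. LEAST y. P y x)"
proof -
  have "computable (\<lambda>p. if P (cfst p) (csnd p) then 0 else 1)"
    by (intro computable_If assms(1) computable_const)
  from total_rec_comp1[OF this[unfolded computable_def] total_rec_cpair]
  have search: "total_rec 2 (\<lambda>ys. if P (ys!0) (ys!1) then 0 else 1)"
    by simp
  show ?thesis
    unfolding computable_def
    by (rule total_rec_LeastI[OF search]) (auto simp: length_Suc_conv assms(2))
qed

lemma decidable_bex_less:
  assumes "decidable (\<lambda>p. P (cfst p) (csnd p))" "computable b"
  shows "decidable (\<lambda>x. \<exists>y<b x. P y x)"
proof -
  have "computable (\<lambda>x. LEAST y. b x \<le> y \<or> P y x)"
    by (rule computable_Least)
      (auto intro!: decidable_disj decidable_le assms computable_comp[OF assms(2)] computable_cfst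
        computable_csnd computable_id)
  then have "decidable (\<lambda>x. (LEAST y. b x \<le> y \<or> P y x) < b x)"
    by (intro decidable_less assms(2))
  moreover have "(LEAST y. b x \<le> y \<or> P y x) < b x \<longleftrightarrow> (\<exists>y<b x. P y x)" for x
  proof
    assume "(LEAST y. b x \<le> y \<or> P y x) < b x"
    moreover have "b x \<le> (LEAST y. b x \<le> y \<or> P y x) \<or> P (LEAST y. b x \<le> y \<or> P y x) x"
      by (rule LeastI[of _ "b x"]) simp
    ultimately show "\<exists>y<b x. P y x"
      by auto
  next
    assume "\<exists>y<b x. P y x"
    then obtain y where "y < b x" "P y x"
      by blast
    then show "(LEAST y. b x \<le> y \<or> P y x) < b x"
      using Least_le[of "\<lambda>y. b x \<le> y \<or> P y x" y] by simp
  qed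
  ultimately show ?thesis
    by simp
qed

lemma decidable_ball_less:
  assumes "decidable (\<lambda>p. P (cfst p) (csnd p))" "computable b"
  shows "decidable (\<lambda>x. \<forall>y<b x. P y x)"
  using decidable_not[OF decidable_bex_less[where P="\<lambda>y x. \<not> P y x", OF decidable_not[OF assms(1)]
        assms(2)]] by simp

lemma decidable_ball_le:
  assumes "decidable (\<lambda>p. P (cfst p) (csnd p))" "computable b"
  shows "decidable (\<lambda>x. \<forall>y\<le>b x. P y x)"
  using decidable_ball_less[OF assms(1) computable_Suc[OF assms(2)]] by (simp add: less_Suc_eq_le)

lemma computable_div: "computable f \<Longrightarrow> computable g \<Longrightarrow> computable (\<lambda>x. f x div g x)"
proof -
  assume f: "computable f" and g: "computable g"
  have "decidable (\<lambda>p. g (csnd p) = 0 \<or> f (csnd p) < g (csnd p) * Suc (cfst p))"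
    by (intro decidable_disj decidable_eq decidable_less computable_mult computable_Suc
        computable_comp[OF f] computable_comp[OF g] computable_cfst computable_csnd computable_id
        computable_const)
  moreover have "\<exists>q. g x = 0 \<or> f x < g x * Suc q" for x
    by (metis dividend_less_times_div mult_Suc_right neq0_conv)
  ultimately have "computable (\<lambda>x. LEAST q. g x = 0 \<or> f x < g x * Suc q)"
    by (rule computable_Least)
  then have "computable (\<lambda>x. if g x = 0 then 0 else (LEAST q. g x = 0 \<or> f x < g x * Suc q))"
    by (intro computable_If decidable_eq f g computable_const)
  moreover have least: "(LEAST q. f x < g x * Suc q) = f x div g x" if "g x \<noteq> 0" for x
  proof (rule Least_equality)
    show "f x < g x * Suc (f x div g x)"
      using that by (metis dividend_less_times_div mult_Suc_right neq0_conv)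
    show "f x div g x \<le> y" if "f x < g x * Suc y" for y
    proof -
      have "f x div g x < Suc y"
        using that \<open>g x \<noteq> 0\<close> by (simp add: div_less_iff_less_mult mult.commute)
      then show ?thesis
        by simp
    qed
  qed
  ultimately show ?thesis
    by (elim computable_cong) (simp add: least)
qed

lemma computable_mod:
  assumes "computable f" "computable g"
  shows "computable (\<lambda>x. f x mod g x)"
  using computable_diff[OF assms(1) computable_mult[OF assms(2) computable_div[OF assms]]]
  by (simp add: minus_mult_div_eq_mod)

text \<open>Operations on the codes of \<open>list_encode\<close>: \<open>[]\<close> has code 0 and \<open>x # xs\<close> has code
  \<open>Suc (cpair x c)\<close>, where \<open>c\<close> is the code of \<open>xs\<close>.\<close>

definition code_hd :: "nat \<Rightarrow> nat" where "code_hd L = cfst (L - 1)"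
definition code_tl :: "nat \<Rightarrow> nat" where "code_tl L = csnd (L - 1)"
definition code_Cons :: "nat \<Rightarrow> nat \<Rightarrow> nat" where "code_Cons a L = Suc (cpair a L)"
definition code_nth :: "nat \<Rightarrow> nat \<Rightarrow> nat" where "code_nth L i = code_hd ((code_tl ^^ i) L)"
definition code_length :: "nat \<Rightarrow> nat" where "code_length L = (LEAST i. (code_tl ^^ i) L = 0)"

lemma code_Cons_list_encode [simp]: "code_Cons x (list_encode xs) = list_encode (x # xs)"
  by (simp add: code_Cons_def cpair_def)

lemma code_hd_list_encode [simp]: "code_hd (list_encode (x # xs)) = x"
  by (simp add: code_hd_def cfst_def)

lemma code_tl_list_encode: "code_tl (list_encode xs) = list_encode (tl xs)"
proof (cases xs)
  case Nil
  have "prod_encode (0, 0) = 0"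
    by (simp add: prod_encode_def)
  then have "prod_decode 0 = (0, 0)"
    by (metis prod_encode_inverse)
  with Nil show ?thesis by (simp add: code_tl_def csnd_def)
qed (simp add: code_tl_def csnd_def)

lemma funpow_code_tl_list_encode: "(code_tl ^^ i) (list_encode xs) = list_encode (drop i xs)"
  by (induction i) (simp_all add: code_tl_list_encode drop_Suc tl_drop)

lemma code_nth_list_encode: "i < length xs \<Longrightarrow> code_nth (list_encode xs) i = xs ! i"
  by (simp add: code_nth_def funpow_code_tl_list_encode Cons_nth_drop_Suc[symmetric]
      del: list_encode.simps)

lemma code_length_list_encode: "code_length (list_encode xs) = length xs"
  unfolding code_length_def funpow_code_tl_list_encode
proof (rule Least_equality)
  show "list_encode (drop (length xs) xs) = 0"
    by simp
  fix y
  assume "list_encode (drop y xs) = 0"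
  then show "length xs \<le> y"
    using list_encode_eq[of "drop y xs" "[]"] by simp
qed

lemma code_length_eq: "code_length L = length (list_decode L)"
  using code_length_list_encode[of "list_decode L"] by simp

lemma code_nth_eq: "i < code_length L \<Longrightarrow> code_nth L i = list_decode L ! i"
  using code_nth_list_encode[of i "list_decode L"] by (simp add: code_length_eq)

lemma bex_set_list_decode: "(\<exists>J\<in>set (list_decode L). P J) \<longleftrightarrow> (\<exists>j<code_length L. P (code_nth L j))"
proof -
  have "(\<exists>j<code_length L. P (code_nth L j)) \<longleftrightarrow> (\<exists>j<code_length L. P (list_decode L ! j))"
    by (auto simp: code_nth_eq)
  then show ?thesis
    unfolding code_length_eq by (metis in_set_conv_nth)
qed

lemma ball_set_list_decode: "(\<forall>J\<in>set (list_decode L). P J) \<longleftrightarrow> (\<forall>j<code_length L. P (code_nth L j))"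
  using bex_set_list_decode[of L "\<lambda>J. \<not> P J"] by blast

lemma code_eqI:
  assumes "code_length U = code_length U'" "\<forall>i<code_length U. code_nth U i = code_nth U' i"
  shows "U = U'"
proof -
  have "list_decode U = list_decode U'"
    by (rule nth_equalityI) (use assms in \<open>auto simp: code_length_eq[symmetric] code_nth_eq[symmetric]\<close>)
  then show ?thesis
    by (metis list_decode_inverse)
qed

lemma computable_code_hd: "computable f \<Longrightarrow> computable (\<lambda>x. code_hd (f x))"
  unfolding code_hd_def by (intro computable_cfst computable_diff computable_const)

lemma computable_code_tl: "computable f \<Longrightarrow> computable (\<lambda>x. code_tl (f x))"
  unfolding code_tl_def by (intro computable_csnd computable_diff computable_const)

lemma computable_code_Cons: "computable f \<Longrightarrow> computable g \<Longrightarrow> computable (\<lambda>x. code_Cons (f x) (g x))"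
  unfolding code_Cons_def by (intro computable_Suc computable_cpair)

lemma computable_code_nth: "computable f \<Longrightarrow> computable g \<Longrightarrow> computable (\<lambda>x. code_nth (f x) (g x))"
  unfolding code_nth_def by (intro computable_code_hd computable_funpow computable_code_tl[OF computable_id])

lemma computable_code_length: "computable f \<Longrightarrow> computable (\<lambda>x. code_length (f x))"
proof -
  assume f: "computable f"
  have "computable (\<lambda>x. LEAST i. (code_tl ^^ i) x = 0)"
  proof (rule computable_Least)
    show "decidable (\<lambda>p. (code_tl ^^ cfst p) (csnd p) = 0)"
      by (intro decidable_eq computable_funpow computable_code_tl computable_cfst computable_csnd
          computable_id computable_const)
    show "\<exists>i. (code_tl ^^ i) x = 0" for x
      using funpow_code_tl_list_encode[of "length (list_decode x)" "list_decode x"] by auto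
  qed
  from computable_comp[OF this f] show ?thesis
    by (simp add: code_length_def)
qed

lemmas computable_intros =
  computable_id computable_const computable_Suc computable_add computable_diff computable_mult
  computable_power computable_div computable_mod computable_cpair computable_cfst computable_csnd
  computable_If computable_code_hd computable_code_tl computable_code_Cons computable_code_nth
  computable_code_length
  decidable_eq decidable_less decidable_le decidable_not decidable_conj decidable_disj decidable_imp
  decidable_iff   decidable_bex_less decidable_ball_less decidable_ball_le

section \<open>A universal interpreter\<close>

text \<open>Programs are codes \<open>cpair op arg\<close> following the clauses of \<open>total_rec\<close>: \<open>op\<close> is
  0 (zero), 1 (successor), 2 (projection to component \<open>arg\<close>), 3 (composition, \<open>arg\<close> =
  \<open>cpair f gs\<close> with \<open>gs\<close> a list code), 4 (primitive recursion, \<open>arg\<close> = \<open>cpair g h\<close>) or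
  5 (minimisation of \<open>arg\<close>). Arguments are passed as list codes.\<close>

inductive prog_eval :: "nat \<Rightarrow> nat \<Rightarrow> nat \<Rightarrow> bool" where
  zero: "cfst e = 0 \<Longrightarrow> prog_eval e X 0"
| succ: "cfst e = 1 \<Longrightarrow> prog_eval e X (Suc (code_hd X))"
| proj: "cfst e = 2 \<Longrightarrow> prog_eval e X (code_nth X (csnd e))"
| comp: "cfst e = 3 \<Longrightarrow> code_length U = code_length (csnd (csnd e)) \<Longrightarrow>
    (\<forall>i<code_length (csnd (csnd e)). prog_eval (code_nth (csnd (csnd e)) i) X (code_nth U i)) \<Longrightarrow>
    prog_eval (cfst (csnd e)) U v \<Longrightarrow> prog_eval e X v"
| rec_0: "cfst e = 4 \<Longrightarrow> code_hd X = 0 \<Longrightarrow> prog_eval (cfst (csnd e)) (code_tl X) v \<Longrightarrow>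
    prog_eval e X v"
| rec_Suc: "cfst e = 4 \<Longrightarrow> code_hd X = Suc k \<Longrightarrow> prog_eval e (code_Cons k (code_tl X)) r \<Longrightarrow>
    prog_eval (csnd (csnd e)) (code_Cons k (code_Cons r (code_tl X))) v \<Longrightarrow> prog_eval e X v"
| mini: "cfst e = 5 \<Longrightarrow> prog_eval (csnd e) (code_Cons y X) 0 \<Longrightarrow>
    (\<forall>z<y. \<exists>u. u \<noteq> 0 \<and> prog_eval (csnd e) (code_Cons z X) u) \<Longrightarrow> prog_eval e X y"

lemma prog_eval_det: "prog_eval e X v \<Longrightarrow> prog_eval e X v' \<Longrightarrow> v = v'"
proof (induction arbitrary: v' rule: prog_eval.induct)
  case (comp e U X v)
  from comp.prems show ?case
  proof (cases rule: prog_eval.cases)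
    case (comp U')
    have "U = U'"
    proof (rule code_eqI)
      show "code_length U = code_length U'"
        using comp comp.hyps(2) by simp
      show "\<forall>i<code_length U. code_nth U i = code_nth U' i"
        using comp comp.IH(1) comp.hyps(2) by simp
    qed
    then show ?thesis
      using comp comp.IH(2) by simp
  qed (use comp.hyps in simp_all)
next
  case (rec_0 e X v)
  from rec_0.prems show ?case
  proof (cases rule: prog_eval.cases)
    case rec_0
    then show ?thesis
      using rec_0.IH by simp
  qed (use rec_0.hyps in simp_all)
next
  case (rec_Suc e X k r v)
  from rec_Suc.prems show ?case
  proof (cases rule: prog_eval.cases)
    case (rec_Suc k' r')
    with rec_Suc.hyps(2) have "k' = k"
      by simp
    moreover from this have "r' = r"
      using rec_Suc rec_Suc.IH(1) by simp
    ultimately show ?thesis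
      using rec_Suc rec_Suc.IH(2) by simp
  qed (use rec_Suc.hyps in simp_all)
next
  case (mini e y X)
  from mini.prems show ?case
  proof (cases rule: prog_eval.cases)
    case mini': mini
    show ?thesis
    proof (cases y v' rule: linorder_cases)
      case less
      with mini' mini.IH(1) show ?thesis
        by blast
    next
      case greater
      with mini' mini.IH(2) show ?thesis
        by blast
    qed
  qed (use mini.hyps in simp_all)
qed (erule prog_eval.cases; simp)+

lemma prog_eval_rec_nat:
  assumes g: "\<forall>ys. length ys = n \<longrightarrow> prog_eval eg (list_encode ys) (g ys)"
    and h: "\<forall>ys. length ys = Suc (Suc n) \<longrightarrow> prog_eval eh (list_encode ys) (h ys)"
    and "length ys = n"
  shows "prog_eval (cpair 4 (cpair eg eh)) (list_encode (x # ys)) (rec_nat (g ys) (\<lambda>k r. h (k # r # ys)) x)"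
proof (induction x)
  case 0
  show ?case
    by (rule prog_eval.rec_0) (use g assms(3) in \<open>simp_all add: code_tl_list_encode del: list_encode.simps(2)\<close>)
next
  case (Suc k)
  let ?r = "rec_nat (g ys) (\<lambda>k r. h (k # r # ys)) k"
  show ?case
  proof (rule prog_eval.rec_Suc[where k=k and r="?r"])
    show "prog_eval (cpair 4 (cpair eg eh)) (code_Cons k (code_tl (list_encode (Suc k # ys)))) ?r"
      using Suc by (simp add: code_tl_list_encode del: list_encode.simps(2))
    show "prog_eval (csnd (csnd (cpair 4 (cpair eg eh))))
        (code_Cons k (code_Cons ?r (code_tl (list_encode (Suc k # ys))))) (rec_nat (g ys) (\<lambda>k r. h (k # r # ys)) (Suc k))"
      using h assms(3) by (simp add: code_tl_list_encode del: list_encode.simps(2))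
  qed (simp_all del: list_encode.simps(2))
qed

lemma prog_eval_Least:
  assumes g: "\<forall>ys. length ys = Suc n \<longrightarrow> prog_eval eg (list_encode ys) (g ys)"
    and "length xs = n" "g (y # xs) = 0"
  shows "prog_eval (cpair 5 eg) (list_encode xs) (LEAST y. g (y # xs) = 0)"
proof (rule prog_eval.mini)
  show "prog_eval (csnd (cpair 5 eg)) (code_Cons (LEAST y. g (y # xs) = 0) (list_encode xs)) 0"
    using g assms(2) LeastI[of "\<lambda>y. g (y # xs) = 0", OF assms(3)]
    by (metis code_Cons_list_encode csnd_cpair length_Cons)
  show "\<forall>z<(LEAST y. g (y # xs) = 0). \<exists>u. u \<noteq> 0 \<and> prog_eval (csnd (cpair 5 eg)) (code_Cons z (list_encode xs)) u"
  proof (intro allI impI)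
    fix z
    assume "z < (LEAST y. g (y # xs) = 0)"
    then have "g (z # xs) \<noteq> 0"
      by (rule not_less_Least)
    then show "\<exists>u. u \<noteq> 0 \<and> prog_eval (csnd (cpair 5 eg)) (code_Cons z (list_encode xs)) u"
      using g[rule_format, of "z # xs"] assms(2)
      by (intro exI[of _ "g (z # xs)"]) (simp del: list_encode.simps(2))
  qed
qed simp

lemma prog_eval_comp:
  assumes f: "\<forall>ys. length ys = length gs \<longrightarrow> prog_eval ef (list_encode ys) (f ys)"
    and gs: "length es = length gs"
      "\<forall>i<length gs. \<forall>xs. length xs = n \<longrightarrow> prog_eval (es ! i) (list_encode xs) ((gs ! i) xs)"
    and "length xs = n"
  shows "prog_eval (cpair 3 (cpair ef (list_encode es))) (list_encode xs) (f (map (\<lambda>g. g xs) gs))"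
proof (rule prog_eval.comp[where U="list_encode (map (\<lambda>g. g xs) gs)"])
  show "\<forall>i<code_length (csnd (csnd (cpair 3 (cpair ef (list_encode es))))).
      prog_eval (code_nth (csnd (csnd (cpair 3 (cpair ef (list_encode es))))) i) (list_encode xs)
        (code_nth (list_encode (map (\<lambda>g. g xs) gs)) i)"
    using gs assms(4) by (simp add: code_length_list_encode code_nth_list_encode)
  show "prog_eval (cfst (csnd (cpair 3 (cpair ef (list_encode es))))) (list_encode (map (\<lambda>g. g xs) gs))
      (f (map (\<lambda>g. g xs) gs))"
    using f by simp
qed (simp_all add: gs(1) code_length_list_encode)

lemma total_rec_program: "total_rec n f \<Longrightarrow> \<exists>e. \<forall>xs. length xs = n \<longrightarrow> prog_eval e (list_encode xs) (f xs)"
proof (induction rule: total_rec.induct)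
  case (zero n)
  show ?case
    by (intro exI[of _ "cpair 0 0"] allI impI prog_eval.zero) simp
next
  case succ
  have "prog_eval (cpair 1 0) (list_encode [x]) (Suc (code_hd (list_encode [x])))" for x
    by (rule prog_eval.succ) simp
  then show ?case
    by (intro exI[of _ "cpair 1 0"]) (auto simp: length_Suc_conv simp del: list_encode.simps(2))
next
  case (proj i n)
  show ?case
  proof (intro exI[of _ "cpair 2 i"] allI impI)
    fix xs :: "nat list"
    assume "length xs = n"
    with proj have "code_nth (list_encode xs) i = xs ! i"
      by (simp add: code_nth_list_encode)
    then show "prog_eval (cpair 2 i) (list_encode xs) (xs ! i)"
      using prog_eval.proj[of "cpair 2 i" "list_encode xs"] by simp
  qed
next
  case (comp m f gs n)
  obtain ef where "\<forall>ys. length ys = m \<longrightarrow> prog_eval ef (list_encode ys) (f ys)"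
    using comp by blast
  moreover obtain c where "\<And>i. i < m \<Longrightarrow> \<forall>xs. length xs = n \<longrightarrow> prog_eval (c i) (list_encode xs) ((gs ! i) xs)"
    using comp.IH(2) by metis
  ultimately show ?case
    using prog_eval_comp[of gs ef f "map c [0..<m]" n] comp.hyps(2)
    by (intro exI[of _ "cpair 3 (cpair ef (list_encode (map c [0..<m])))"]) auto
next
  case (prim n g h)
  then obtain eg eh where "\<forall>ys. length ys = n \<longrightarrow> prog_eval eg (list_encode ys) (g ys)"
    "\<forall>ys. length ys = Suc (Suc n) \<longrightarrow> prog_eval eh (list_encode ys) (h ys)"
    by blast
  from prog_eval_rec_nat[OF this] show ?case
    by (intro exI[of _ "cpair 4 (cpair eg eh)"]) (auto simp: length_Suc_conv)
next
  case (mini n g)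
  then obtain eg where eg: "\<forall>ys. length ys = Suc n \<longrightarrow> prog_eval eg (list_encode ys) (g ys)"
    by blast
  show ?case
  proof (intro exI[of _ "cpair 5 eg"] allI impI)
    fix xs :: "nat list"
    assume "length xs = n"
    with mini.hyps(2) obtain y where "g (y # xs) = 0"
      by blast
    from prog_eval_Least[OF eg \<open>length xs = n\<close> this]
    show "prog_eval (cpair 5 eg) (list_encode xs) (LEAST y. g (y # xs) = 0)" .
  qed
next
  case (ext n f f')
  then show ?case
    by metis
qed

text \<open>A judgement \<open>jdg r e X v w\<close> claims \<open>prog_eval e X v\<close>. It is justified in a set \<open>S\<close> of
  judgements if it follows by one rule of \<open>prog_eval\<close> from judgements in \<open>S\<close> of smaller
  rank \<open>r\<close>; the slot \<open>w\<close> holds the intermediate value of a composition or recursion step.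
  Ranks make justifications well-founded, so finite justified sets are sound certificates.\<close>

definition jdg :: "nat \<Rightarrow> nat \<Rightarrow> nat \<Rightarrow> nat \<Rightarrow> nat \<Rightarrow> nat" where
  "jdg r e X v w = cpair r (cpair e (cpair X (cpair v w)))"

definition jdg_rank :: "nat \<Rightarrow> nat" where "jdg_rank J = cfst J"
definition jdg_prog :: "nat \<Rightarrow> nat" where "jdg_prog J = cfst (csnd J)"
definition jdg_input :: "nat \<Rightarrow> nat" where "jdg_input J = cfst (csnd (csnd J))"
definition jdg_value :: "nat \<Rightarrow> nat" where "jdg_value J = cfst (csnd (csnd (csnd J)))"
definition jdg_aux :: "nat \<Rightarrow> nat" where "jdg_aux J = csnd (csnd (csnd (csnd J)))"

lemma jdg_sel [simp]:
  "jdg_rank (jdg r e X v w) = r" "jdg_prog (jdg r e X v w) = e" "jdg_input (jdg r e X v w) = X"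
  "jdg_value (jdg r e X v w) = v" "jdg_aux (jdg r e X v w) = w"
  by (simp_all add: jdg_def jdg_rank_def jdg_prog_def jdg_input_def jdg_value_def jdg_aux_def)

definition derived :: "nat set \<Rightarrow> nat \<Rightarrow> nat \<Rightarrow> nat \<Rightarrow> nat \<Rightarrow> bool" where
  "derived S r e X v \<longleftrightarrow>
    (\<exists>J\<in>S. jdg_rank J < r \<and> jdg_prog J = e \<and> jdg_input J = X \<and> jdg_value J = v)"

definition derived_nonzero :: "nat set \<Rightarrow> nat \<Rightarrow> nat \<Rightarrow> nat \<Rightarrow> bool" where
  "derived_nonzero S r e X \<longleftrightarrow>
    (\<exists>J\<in>S. jdg_rank J < r \<and> jdg_prog J = e \<and> jdg_input J = X \<and> jdg_value J \<noteq> 0)"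

definition justified :: "nat set \<Rightarrow> nat \<Rightarrow> bool" where
  "justified S J \<longleftrightarrow>
    (let r = jdg_rank J; e = jdg_prog J; X = jdg_input J; v = jdg_value J; w = jdg_aux J;
         op = cfst e; gs = csnd (csnd e); k = code_hd X - 1 in
      (op = 0 \<and> v = 0) \<or>
      (op = 1 \<and> v = Suc (code_hd X)) \<or>
      (op = 2 \<and> v = code_nth X (csnd e)) \<or>
      (op = 3 \<and> code_length w = code_length gs \<and>
        (\<forall>i<code_length gs. derived S r (code_nth gs i) X (code_nth w i)) \<and>
        derived S r (cfst (csnd e)) w v) \<or>
      (op = 4 \<and> code_hd X = 0 \<and> derived S r (cfst (csnd e)) (code_tl X) v) \<or>
      (op = 4 \<and> code_hd X \<noteq> 0 \<and> derived S r e (code_Cons k (code_tl X)) w \<and>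
        derived S r (csnd (csnd e)) (code_Cons k (code_Cons w (code_tl X))) v) \<or>
      (op = 5 \<and> derived S r (csnd e) (code_Cons v X) 0 \<and>
        (\<forall>z<v. derived_nonzero S r (csnd e) (code_Cons z X))))"

definition derivation :: "nat set \<Rightarrow> bool" where
  "derivation S \<longleftrightarrow> finite S \<and> (\<forall>J\<in>S. justified S J)"

lemma justified_sound:
  assumes "justified S J"
    and "\<And>e X v. derived S (jdg_rank J) e X v \<Longrightarrow> prog_eval e X v"
    and "\<And>e X. derived_nonzero S (jdg_rank J) e X \<Longrightarrow> \<exists>u. u \<noteq> 0 \<and> prog_eval e X u"
  shows "prog_eval (jdg_prog J) (jdg_input J) (jdg_value J)"
  using assms(1) unfolding justified_def Let_def
proof (elim disjE conjE)
  assume "cfst (jdg_prog J) = 0" "jdg_value J = 0"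
  then show ?thesis
    by (simp add: prog_eval.zero)
next
  assume "cfst (jdg_prog J) = 1" "jdg_value J = Suc (code_hd (jdg_input J))"
  then show ?thesis
    by (simp add: prog_eval.succ)
next
  assume "cfst (jdg_prog J) = 2" "jdg_value J = code_nth (jdg_input J) (csnd (jdg_prog J))"
  then show ?thesis
    by (simp add: prog_eval.proj)
next
  assume a: "cfst (jdg_prog J) = 3" "code_length (jdg_aux J) = code_length (csnd (csnd (jdg_prog J)))"
    "\<forall>i<code_length (csnd (csnd (jdg_prog J))).
      derived S (jdg_rank J) (code_nth (csnd (csnd (jdg_prog J))) i) (jdg_input J) (code_nth (jdg_aux J) i)"
    "derived S (jdg_rank J) (cfst (csnd (jdg_prog J))) (jdg_aux J) (jdg_value J)"
  show ?thesis
    by (rule prog_eval.comp[where U="jdg_aux J"]) (use a assms(2) in auto)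
next
  assume a: "cfst (jdg_prog J) = 4" "code_hd (jdg_input J) = 0"
    "derived S (jdg_rank J) (cfst (csnd (jdg_prog J))) (code_tl (jdg_input J)) (jdg_value J)"
  show ?thesis
    by (rule prog_eval.rec_0) (use a assms(2) in auto)
next
  assume a: "cfst (jdg_prog J) = 4" "code_hd (jdg_input J) \<noteq> 0"
    "derived S (jdg_rank J) (jdg_prog J) (code_Cons (code_hd (jdg_input J) - 1) (code_tl (jdg_input J))) (jdg_aux J)"
    "derived S (jdg_rank J) (csnd (csnd (jdg_prog J)))
      (code_Cons (code_hd (jdg_input J) - 1) (code_Cons (jdg_aux J) (code_tl (jdg_input J)))) (jdg_value J)"
  show ?thesis
    by (rule prog_eval.rec_Suc[where k="code_hd (jdg_input J) - 1" and r="jdg_aux J"]) (use a assms(2) in auto)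
next
  assume a: "cfst (jdg_prog J) = 5" "derived S (jdg_rank J) (csnd (jdg_prog J)) (code_Cons (jdg_value J) (jdg_input J)) 0"
    "\<forall>z<jdg_value J. derived_nonzero S (jdg_rank J) (csnd (jdg_prog J)) (code_Cons z (jdg_input J))"
  show ?thesis
    by (rule prog_eval.mini) (use a assms(2,3) in auto)
qed

lemma derivation_sound:
  assumes "\<forall>J\<in>S. justified S J" "J \<in> S"
  shows "prog_eval (jdg_prog J) (jdg_input J) (jdg_value J)"
  using assms(2)
proof (induction "jdg_rank J" arbitrary: J rule: less_induct)
  case less
  show ?case
  proof (rule justified_sound)
    show "justified S J"
      using assms(1) less.prems by blast
    show "prog_eval e X v" if "derived S (jdg_rank J) e X v" for e X v
      using that less unfolding derived_def by blast
    show "\<exists>u. u \<noteq> 0 \<and> prog_eval e X u" if "derived_nonzero S (jdg_rank J) e X" for e X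
      using that less unfolding derived_nonzero_def by blast
  qed
qed

lemma derived_mono: "derived S r e X v \<Longrightarrow> S \<subseteq> S' \<Longrightarrow> r \<le> r' \<Longrightarrow> derived S' r' e X v"
  unfolding derived_def by (meson less_le_trans subsetD)

lemma derived_nonzero_mono: "derived_nonzero S r e X \<Longrightarrow> S \<subseteq> S' \<Longrightarrow> r \<le> r' \<Longrightarrow> derived_nonzero S' r' e X"
  unfolding derived_nonzero_def by (meson less_le_trans subsetD)

lemma justified_mono: "justified S J \<Longrightarrow> S \<subseteq> S' \<Longrightarrow> justified S' J"
  unfolding justified_def Let_def
  by (elim disjE) (blast dest: derived_mono[OF _ _ order_refl] derived_nonzero_mono[OF _ _ order_refl])+

lemma derivation_Un: "derivation S \<Longrightarrow> derivation S' \<Longrightarrow> derivation (S \<union> S')"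
  unfolding derivation_def by (blast intro: justified_mono)

lemma derivation_empty: "derivation {}"
  by (simp add: derivation_def)

definition derivable :: "nat \<Rightarrow> nat \<Rightarrow> nat \<Rightarrow> bool" where
  "derivable e X v \<longleftrightarrow> (\<exists>S r. derivation S \<and> derived S r e X v)"

lemma derivable_by_rule:
  assumes "derivation S" "justified S (jdg r e X v w)"
  shows "derivable e X v"
proof -
  have "derivation (insert (jdg r e X v w) S)"
    using assms justified_mono[of _ _ "insert (jdg r e X v w) S"] unfolding derivation_def by blast
  moreover have "derived (insert (jdg r e X v w) S) (Suc r) e X v"
    unfolding derived_def by simp
  ultimately show ?thesis
    unfolding derivable_def by blast
qed

lemma derivable_common_derivation:
  assumes "finite T" "\<forall>(e, X, v)\<in>T. derivable e X v"
  shows "\<exists>S r. derivation S \<and> (\<forall>(e, X, v)\<in>T. derived S r e X v)"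
  using assms
proof (induction rule: finite_induct)
  case empty
  show ?case
    using derivation_empty by blast
next
  case (insert t T)
  obtain S r where S: "derivation S" "\<forall>(e, X, v)\<in>T. derived S r e X v"
    using insert.IH insert.prems by blast
  obtain S' r' where S': "derivation S'" "derived S' r' (fst t) (fst (snd t)) (snd (snd t))"
    using insert.prems unfolding derivable_def by (auto split: prod.splits)
  have "\<forall>(e, X, v)\<in>insert t T. derived (S \<union> S') (max r r') e X v"
    using S(2) S'(2) by (auto intro: derived_mono)
  with derivation_Un[OF S(1) S'(1)] show ?case
    by blast
qed

lemma derived_nonzeroI: "derived S r e X v \<Longrightarrow> v \<noteq> 0 \<Longrightarrow> derived_nonzero S r e X"
  unfolding derived_def derived_nonzero_def by blast

lemma prog_eval_derivable: "prog_eval e X v \<Longrightarrow> derivable e X v"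
proof (induction rule: prog_eval.induct)
  case (zero e X)
  then show ?case
    using derivable_by_rule[OF derivation_empty, of 0 e X 0 0] by (simp add: justified_def)
next
  case (succ e X)
  then show ?case
    using derivable_by_rule[OF derivation_empty, of 0 e X _ 0] by (simp add: justified_def)
next
  case (proj e X)
  then show ?case
    using derivable_by_rule[OF derivation_empty, of 0 e X _ 0] by (simp add: justified_def)
next
  case (comp e U X v)
  let ?gs = "csnd (csnd e)"
  let ?T = "insert (cfst (csnd e), U, v) ((\<lambda>i. (code_nth ?gs i, X, code_nth U i)) ` {..<code_length ?gs})"
  have "\<forall>(e', X', v')\<in>?T. derivable e' X' v'"
    using comp.IH by auto
  then obtain S r where "derivation S" "\<forall>(e', X', v')\<in>?T. derived S r e' X' v'"
    using derivable_common_derivation[of ?T] by blast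
  with comp.hyps(1,2) show ?case
    by (intro derivable_by_rule[of S r e X v U]) (auto simp: justified_def Let_def)
next
  case (rec_0 e X v)
  then obtain S r where "derivation S" "derived S r (cfst (csnd e)) (code_tl X) v"
    unfolding derivable_def by blast
  with rec_0.hyps(1,2) show ?case
    by (intro derivable_by_rule[of S r e X v 0]) (simp_all add: justified_def Let_def)
next
  case (rec_Suc e X k r v)
  let ?T = "{(e, code_Cons k (code_tl X), r), (csnd (csnd e), code_Cons k (code_Cons r (code_tl X)), v)}"
  obtain S R where "derivation S" "\<forall>(e', X', v')\<in>?T. derived S R e' X' v'"
    using derivable_common_derivation[of ?T] rec_Suc.IH by auto
  with rec_Suc.hyps(1,2) show ?case
    by (intro derivable_by_rule[of S R e X v r]) (simp_all add: justified_def Let_def)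
next
  case (mini e y X)
  obtain u where u: "\<forall>z<y. u z \<noteq> 0 \<and> derivable (csnd e) (code_Cons z X) (u z)"
    using mini.IH(2) by metis
  let ?T = "insert (csnd e, code_Cons y X, 0) ((\<lambda>z. (csnd e, code_Cons z X, u z)) ` {..<y})"
  have "\<forall>(e', X', v')\<in>?T. derivable e' X' v'"
    using mini.IH(1) u by auto
  then obtain S r where "derivation S" "\<forall>(e', X', v')\<in>?T. derived S r e' X' v'"
    using derivable_common_derivation[of ?T] by blast
  with mini.hyps(1) u show ?case
    by (intro derivable_by_rule[of S r e X y 0]) (auto simp: justified_def Let_def intro: derived_nonzeroI)
qed

definition certificate :: "nat \<Rightarrow> nat \<Rightarrow> nat \<Rightarrow> nat \<Rightarrow> bool" where
  "certificate e X v L \<longleftrightarrow> (\<forall>J\<in>set (list_decode L). justified (set (list_decode L)) J) \<and>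
     (\<exists>J\<in>set (list_decode L). jdg_prog J = e \<and> jdg_input J = X \<and> jdg_value J = v)"

lemma prog_eval_iff_certificate: "prog_eval e X v \<longleftrightarrow> (\<exists>L. certificate e X v L)"
proof
  assume "prog_eval e X v"
  then obtain S r where "derivation S" "derived S r e X v"
    using prog_eval_derivable unfolding derivable_def by blast
  moreover from \<open>derivation S\<close> obtain xs where "set xs = S"
    unfolding derivation_def using finite_list by blast
  ultimately have "certificate e X v (list_encode xs)"
    unfolding certificate_def derivation_def derived_def by auto
  then show "\<exists>L. certificate e X v L" ..
next
  assume "\<exists>L. certificate e X v L"
  then show "prog_eval e X v"
    unfolding certificate_def using derivation_sound by blast
qed

lemma decidable_certificate:
  assumes "computable fe" "computable fX" "computable fv" "computable fL"
  shows "decidable (\<lambda>x. certificate (fe x) (fX x) (fv x) (fL x))"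
  unfolding certificate_def justified_def Let_def derived_def derived_nonzero_def
    jdg_rank_def jdg_prog_def jdg_input_def jdg_value_def jdg_aux_def
  by (simp only: bex_set_list_decode ball_set_list_decode)
    (intro computable_intros computable_comp[OF assms(1)] computable_comp[OF assms(2)]
      computable_comp[OF assms(3)] computable_comp[OF assms(4)])

text \<open>Meaningful only for programs that halt on every input: otherwise \<open>LEAST\<close> returns junk.\<close>

definition run :: "nat \<Rightarrow> nat \<Rightarrow> nat" where
  "run e n = cfst (LEAST p. certificate e (code_Cons n 0) (cfst p) (csnd p))"

lemma
  assumes "\<And>n. \<exists>v. prog_eval e (code_Cons n 0) v"
  shows computable_run: "computable (run e)"
    and prog_eval_run: "prog_eval e (code_Cons n 0) (run e n)"
proof -
  have certified: "\<exists>p. certificate e (code_Cons n 0) (cfst p) (csnd p)" for n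
    using assms[of n] by (metis cfst_cpair csnd_cpair prog_eval_iff_certificate)
  have "computable (\<lambda>n. LEAST p. certificate e (code_Cons n 0) (cfst p) (csnd p))"
    by (rule computable_Least[OF _ certified])
      (intro decidable_certificate computable_intros computable_cfst[OF computable_id])
  then show "computable (run e)"
    unfolding run_def[abs_def] by (rule computable_cfst)
  show "prog_eval e (code_Cons n 0) (run e n)"
    unfolding run_def using LeastI_ex[OF certified] prog_eval_iff_certificate by blast
qed

section \<open>Many-one reducibility\<close>

lemma m_reducesI: "computable f \<Longrightarrow> (\<And>n. A n \<longleftrightarrow> B (f n)) \<Longrightarrow> m_reduces A B"
  unfolding m_reduces_def by blast

lemma m_reduces_trans: "m_reduces A B \<Longrightarrow> m_reduces B C \<Longrightarrow> m_reduces A C"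
  unfolding m_reduces_def by (metis computable_comp)

lemma m_equiv_refl: "m_equiv A A"
  unfolding m_equiv_def using m_reducesI[OF computable_id] by blast

lemma m_equiv_sym: "m_equiv A B \<Longrightarrow> m_equiv B A"
  unfolding m_equiv_def by blast

lemma m_equiv_trans: "m_equiv A B \<Longrightarrow> m_equiv B C \<Longrightarrow> m_equiv A C"
  unfolding m_equiv_def using m_reduces_trans by blast

definition reduces_via :: "nat \<Rightarrow> (nat \<Rightarrow> bool) \<Rightarrow> (nat \<Rightarrow> bool) \<Rightarrow> bool" where
  "reduces_via e A B \<longleftrightarrow> (\<forall>j. \<exists>v. prog_eval e (code_Cons j 0) v \<and> (A j \<longleftrightarrow> B v))"

lemma m_reduces_iff_reduces_via: "m_reduces A B \<longleftrightarrow> (\<exists>e. reduces_via e A B)"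
proof
  assume "m_reduces A B"
  then obtain f where f: "computable f" "\<And>n. A n \<longleftrightarrow> B (f n)"
    unfolding m_reduces_def by blast
  then obtain e where e: "\<forall>xs. length xs = 1 \<longrightarrow> prog_eval e (list_encode xs) (f (hd xs))"
    unfolding computable_def using total_rec_program by blast
  have "prog_eval e (code_Cons j 0) (f j)" for j
  proof -
    have "code_Cons j 0 = list_encode [j]"
      using code_Cons_list_encode[of j "[]"] by simp
    then show ?thesis
      using e[rule_format, of "[j]"] by simp
  qed
  with f(2) show "\<exists>e. reduces_via e A B"
    unfolding reduces_via_def by blast
next
  assume "\<exists>e. reduces_via e A B"
  then obtain e where e: "reduces_via e A B" ..
  then have total: "\<exists>v. prog_eval e (code_Cons n 0) v" for n
    unfolding reduces_via_def by blast
  have "A n \<longleftrightarrow> B (run e n)" for n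
    using e prog_eval_det[OF _ prog_eval_run[OF total]] unfolding reduces_via_def by blast
  with computable_run[OF total] show "m_reduces A B"
    by (rule m_reducesI)
qed

section \<open>Prefix codes\<close>

lemma prefix_code_Suc:
  "prefix_code X (Suc m) = (if X 0 then 1 else 0) + 2 * prefix_code (\<lambda>i. X (Suc i)) m"
proof -
  define f where "f = (\<lambda>i. if X i then 2 ^ i else (0::nat))"
  have "(\<Sum>i<Suc m. f i) = f 0 + (\<Sum>i<m. f (Suc i))"
    by (rule sum.lessThan_Suc_shift)
  also have "\<dots> = (if X 0 then 1 else 0) + 2 * (\<Sum>i<m. if X (Suc i) then 2 ^ i else 0)"
    by (auto simp: f_def sum_distrib_left intro!: sum.cong)
  finally show ?thesis
    unfolding prefix_code_def f_def by simp
qed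

lemma prefix_code_bounds: "2 ^ m \<le> prefix_code X m \<and> prefix_code X m < 2 ^ Suc m"
proof (induction m arbitrary: X)
  case 0
  then show ?case
    by (simp add: prefix_code_def)
next
  case (Suc m)
  from Suc.IH[of "\<lambda>i. X (Suc i)"] show ?case
    by (simp add: prefix_code_Suc)
qed

lemma prefix_code_bit: "i < m \<Longrightarrow> prefix_code X m div 2 ^ i mod 2 = (if X i then 1 else 0)"
proof (induction i arbitrary: X m)
  case 0
  then show ?case
    by (cases m) (simp_all add: prefix_code_Suc)
next
  case (Suc i)
  then obtain m' where m: "m = Suc m'"
    by (cases m) auto
  have "prefix_code X m div 2 ^ Suc i = prefix_code (\<lambda>i. X (Suc i)) m' div 2 ^ i"
    by (simp add: m prefix_code_Suc div_mult2_eq)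
  with Suc.IH[of m' "\<lambda>i. X (Suc i)"] Suc.prems m show ?case
    by simp
qed

definition prefix_length :: "nat \<Rightarrow> nat" where
  "prefix_length c = (LEAST k. c < 2 ^ Suc k)"

definition prefix_member :: "nat \<Rightarrow> nat \<Rightarrow> bool" where
  "prefix_member c i \<longleftrightarrow> i < prefix_length c \<and> c div 2 ^ i mod 2 = 1"

definition trunc :: "nat \<Rightarrow> (nat \<Rightarrow> bool) \<Rightarrow> nat \<Rightarrow> bool" where
  "trunc m X i \<longleftrightarrow> i < m \<and> X i"

lemma prefix_length_prefix_code: "prefix_length (prefix_code X m) = m"
  unfolding prefix_length_def
proof (rule Least_equality)
  show "prefix_code X m < 2 ^ Suc m"
    using prefix_code_bounds by blast
  fix k
  assume "prefix_code X m < 2 ^ Suc k"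
  then have "(2::nat) ^ m < 2 ^ Suc k"
    using prefix_code_bounds[of m X] by linarith
  then show "m \<le> k"
    using power_less_imp_less_exp[of "2::nat" m "Suc k"] by simp
qed

lemma prefix_member_prefix_code: "prefix_member (prefix_code X m) = trunc m X"
  by (auto simp: fun_eq_iff prefix_member_def trunc_def prefix_length_prefix_code prefix_code_bit
      split: if_splits)

lemma computable_prefix_length: "computable f \<Longrightarrow> computable (\<lambda>x. prefix_length (f x))"
proof -
  assume f: "computable f"
  have "computable (\<lambda>c. LEAST k. c < (2::nat) ^ Suc k)"
  proof (rule computable_Least)
    show "decidable (\<lambda>p. csnd p < (2::nat) ^ Suc (cfst p))"
      by (intro computable_intros)
    show "\<exists>k. c < (2::nat) ^ Suc k" for c
      using less_exp[of c] by (metis less_trans lessI power_strict_increasing_iff one_less_numeral_iff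
          semiring_norm(76))
  qed
  from computable_comp[OF this f] show ?thesis
    by (simp add: prefix_length_def)
qed

lemma decidable_prefix_member: "computable c \<Longrightarrow> computable i \<Longrightarrow> decidable (\<lambda>x. prefix_member (c x) (i x))"
  unfolding prefix_member_def by (intro computable_intros computable_prefix_length)

lemma Pi02_pairsI:
  assumes "decidable (\<lambda>p. Q (cfst p) (cfst (csnd p)) (csnd (csnd p)))"
    and "\<And>X Y. (X, Y) \<in> P \<longleftrightarrow> (\<forall>n. \<exists>m. Q n (prefix_code X m) (prefix_code Y m))"
  shows "Pi02_pairs P"
proof -
  have "computable (\<lambda>p. if Q (cfst p) (cfst (csnd p)) (csnd (csnd p)) then 0 else 1)"
    by (intro computable_If assms(1) computable_const)
  moreover have "total_rec 3 (\<lambda>xs. cpair (xs!0) (cpair (xs!1) (xs!2)))"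
    using total_rec_comp2[where f=cpair, OF total_rec_cpair total_rec.proj[of 0 3]
        total_rec_comp2[where f=cpair, OF total_rec_cpair total_rec.proj[of 1 3] total_rec.proj[of 2 3]]]
    by simp
  ultimately have "total_rec 3 (\<lambda>xs. if Q (xs!0) (xs!1) (xs!2) then 0 else 1)"
    unfolding computable_def using total_rec_comp1 by fastforce
  then show ?thesis
    unfolding Pi02_pairs_def using assms(2) by (intro exI[of _ "\<lambda>xs. if Q (xs!0) (xs!1) (xs!2) then 0 else 1"]) simp
qed

section \<open>The graph\<close>

lemma has_diameter_2I:
  assumes "\<And>x y. (x, y) \<in> G\<^sup>* \<Longrightarrow> x = y \<or> (\<exists>z. (x, z) \<in> G \<and> (z, y) \<in> G)"
    and "(a, b) \<in> G\<^sup>*" "a \<noteq> b" "(a, b) \<notin> G"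
  shows "has_diameter G 2"
  unfolding has_diameter_def
proof
  show "diam_bounded G 2"
    unfolding diam_bounded_def
  proof (intro allI impI)
    fix x y
    assume "(x, y) \<in> G\<^sup>*"
    with assms(1) consider "x = y" | z where "(x, z) \<in> G" "(z, y) \<in> G"
      by blast
    then show "\<exists>j\<le>2. (x, y) \<in> G ^^ j"
    proof cases
      case 1
      then show ?thesis
        by (intro exI[of _ 0]) simp
    next
      case 2
      then have "(x, z) \<in> G ^^ 1"
        by simp
      with 2(2) have "(x, y) \<in> G ^^ Suc 1"
        by (intro relpow_Suc_I)
      then show ?thesis
        by (intro exI[of _ "Suc 1"]) simp
    qed
  qed
  show "\<forall>k<2. \<not> diam_bounded G k"
  proof (intro allI impI notI)
    fix k :: nat
    assume "k < 2" "diam_bounded G k"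
    with assms(2) obtain j where "j \<le> k" "(a, b) \<in> G ^^ j"
      unfolding diam_bounded_def by blast
    moreover from \<open>k < 2\<close> \<open>j \<le> k\<close> have "j = 0 \<or> j = 1"
      by linarith
    ultimately show False
      using assms(3,4) by (auto elim: relpow_0_E)
  qed
qed

definition column :: "(nat \<Rightarrow> bool) \<Rightarrow> nat \<Rightarrow> nat \<Rightarrow> bool" where
  "column C k i \<longleftrightarrow> C (3 * i + k)"

definition join3 :: "(nat \<Rightarrow> bool) \<Rightarrow> (nat \<Rightarrow> bool) \<Rightarrow> nat \<Rightarrow> nat \<Rightarrow> bool" where
  "join3 A B h i \<longleftrightarrow>
    (if i mod 3 = 0 then A (i div 3) else if i mod 3 = 1 then B (i div 3) else i div 3 < h)"

lemma mod_div_3 [simp]: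
  "Suc (3 * i) mod 3 = 1" "Suc (3 * i) div 3 = i" "Suc (Suc (3 * i)) mod 3 = 2" "Suc (Suc (3 * i)) div 3 = i"
  by presburger+

lemma column_join3 [simp]:
  "column (join3 A B h) 0 = A" "column (join3 A B h) (Suc 0) = B"
  "column (join3 A B h) 2 = (\<lambda>i. i < h)"
  by (simp_all add: fun_eq_iff column_def join3_def)

text \<open>The length \<open>h\<close> of the third column carries programs \<open>cfst h\<close> for the reductions between
  the first two columns; the padding \<open>csnd h\<close> lets a join of two sets differ from both.\<close>

definition join_witness :: "(nat \<Rightarrow> bool) \<Rightarrow> (nat \<Rightarrow> bool) \<Rightarrow> bool" where
  "join_witness X C \<longleftrightarrow> (\<exists>h. (\<forall>i. column C 2 i \<longleftrightarrow> i < h) \<and>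
     (\<exists>a. column C 0 a) \<and> (\<exists>a. \<not> column C 0 a) \<and> (X = column C 0 \<or> X = column C 1) \<and>
     reduces_via (cfst (cfst h)) (column C 1) (column C 0) \<and>
     reduces_via (csnd (cfst h)) (column C 0) (column C 1))"

definition join_graph :: "((nat \<Rightarrow> bool) \<times> (nat \<Rightarrow> bool)) set" where
  "join_graph = {(X, Y). X \<noteq> Y \<and> (join_witness X Y \<or> join_witness Y X)}"

lemma m_equiv_column_0:
  assumes "m_reduces (column C 1) (column C 0)" "\<forall>i. column C 2 i \<longleftrightarrow> i < h"
    and "column C 0 a1" "\<not> column C 0 a0"
  shows "m_equiv (column C 0) C"
proof -
  obtain f where f: "computable f" "\<And>j. column C 1 j \<longleftrightarrow> column C 0 (f j)"
    using assms(1) unfolding m_reduces_def by blast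
  have "m_reduces (column C 0) C"
    by (rule m_reducesI[where f="\<lambda>i. 3 * i"]) (auto intro: computable_intros simp: column_def)
  moreover have "m_reduces C (column C 0)"
  proof (rule m_reducesI)
    show "computable (\<lambda>k. if k mod 3 = 0 then k div 3 else if k mod 3 = 1 then f (k div 3)
        else if k div 3 < h then a1 else a0)"
      by (intro computable_intros computable_comp[OF f(1)])
    fix k :: nat
    have k: "k = 3 * (k div 3) + k mod 3"
      by simp
    consider "k mod 3 = 0" | "k mod 3 = 1" | "k mod 3 = 2"
      by arith
    then show "C k \<longleftrightarrow> column C 0 (if k mod 3 = 0 then k div 3 else if k mod 3 = 1 then f (k div 3)
        else if k div 3 < h then a1 else a0)"
    proof cases
      case 1
      with k show ?thesis
        by (simp add: column_def)
    next
      case 2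
      with k have "C k = column C 1 (k div 3)"
        by (simp add: column_def)
      with 2 f(2) show ?thesis
        by simp
    next
      case 3
      with k have "C k = column C 2 (k div 3)"
        by (simp add: column_def)
      with 3 assms(2-4) show ?thesis
        by simp
    qed
  qed
  ultimately show ?thesis
    unfolding m_equiv_def by blast
qed

lemma join_witness_m_equiv:
  assumes "join_witness X C"
  shows "m_equiv X C"
proof -
  obtain h a1 a0 where h: "\<forall>i. column C 2 i \<longleftrightarrow> i < h" and a: "column C 0 a1" "\<not> column C 0 a0"
    and X: "X = column C 0 \<or> X = column C 1"
    and r: "m_reduces (column C 1) (column C 0)" "m_reduces (column C 0) (column C 1)"
    using assms unfolding join_witness_def m_reduces_iff_reduces_via by blast
  have "m_equiv (column C 0) C"
    by (rule m_equiv_column_0[OF r(1) h a])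
  moreover have "m_equiv (column C 1) (column C 0)"
    using r unfolding m_equiv_def by blast
  ultimately show ?thesis
    using X m_equiv_trans by blast
qed

lemma join_witness_join3:
  assumes "reduces_via e1 B A" "reduces_via e2 A B" "A a1" "\<not> A a0" "X = A \<or> X = B"
  shows "join_witness X (join3 A B (cpair (cpair e1 e2) k))"
  using assms unfolding join_witness_def by (intro exI[of _ "cpair (cpair e1 e2) k"]) auto

lemma m_equiv_common_neighbour:
  assumes "m_equiv A B" "A \<noteq> B"
  shows "\<exists>C. (A, C) \<in> join_graph \<and> (C, B) \<in> join_graph"
proof -
  obtain e1 e2 where e: "reduces_via e1 B A" "reduces_via e2 A B"
    using assms(1) unfolding m_equiv_def m_reduces_iff_reduces_via by blast
  have nonconst: "\<exists>a. A a \<noteq> c" for c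
  proof (rule ccontr)
    assume "\<not> (\<exists>a. A a \<noteq> c)"
    then have "A = (\<lambda>_. c)" "B = (\<lambda>_. c)"
      using e(1) unfolding reduces_via_def by auto
    with assms(2) show False
      by simp
  qed
  obtain a1 a0 where a: "A a1" "\<not> A a0"
    using nonconst[of True] nonconst[of False] by blast
  define C where "C k = join3 A B (cpair (cpair e1 e2) k)" for k
  have C_inj: "k = k'" if "C k = C k'" for k k'
  proof -
    have "column (C k) 2 = column (C k') 2"
      using that by simp
    then have "\<forall>i. i < cpair (cpair e1 e2) k \<longleftrightarrow> i < cpair (cpair e1 e2) k'"
      by (simp add: C_def fun_eq_iff)
    then have "cpair (cpair e1 e2) k = cpair (cpair e1 e2) k'"
      using not_less_iff_gr_or_eq by blast
    then show ?thesis
      by simp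
  qed
  have "\<exists>k. C k \<noteq> A \<and> C k \<noteq> B"
  proof (rule ccontr)
    assume "\<not> (\<exists>k. C k \<noteq> A \<and> C k \<noteq> B)"
    then have "C 0 = A \<or> C 0 = B" "C 1 = A \<or> C 1 = B" "C 2 = A \<or> C 2 = B"
      by blast+
    then show False
      using C_inj[of 0 1] C_inj[of 0 2] C_inj[of 1 2] by auto
  qed
  then obtain k where "C k \<noteq> A" "C k \<noteq> B"
    by blast
  moreover have "join_witness A (C k)" "join_witness B (C k)"
    unfolding C_def using join_witness_join3[OF e a] by blast+
  ultimately have "(A, C k) \<in> join_graph" "(C k, B) \<in> join_graph"
    unfolding join_graph_def by auto
  then show ?thesis
    by blast
qed

lemma join_graph_rtrancl: "join_graph\<^sup>* = {(X, Y). m_equiv X Y}"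
proof (intro equalityI subsetI; clarify)
  fix X Y
  assume "(X, Y) \<in> join_graph\<^sup>*"
  then show "m_equiv X Y"
  proof (induction rule: rtrancl_induct)
    case base
    show ?case
      by (rule m_equiv_refl)
  next
    case (step Y Z)
    then show ?case
      unfolding join_graph_def using join_witness_m_equiv m_equiv_sym m_equiv_trans by blast
  qed
next
  fix X Y
  assume "m_equiv X Y"
  then show "(X, Y) \<in> join_graph\<^sup>*"
    using m_equiv_common_neighbour[of X Y] by (cases "X = Y") (blast intro: rtrancl_into_rtrancl)+
qed

section \<open>The graph is \<open>\<Pi>\<^sup>0\<^sub>2\<close>\<close>

text \<open>The first two conjuncts determine \<open>h\<close> from \<open>C\<close>, independently of \<open>n\<close>.\<close>

definition witness_upto :: "nat \<Rightarrow> (nat \<Rightarrow> bool) \<Rightarrow> (nat \<Rightarrow> bool) \<Rightarrow> nat \<Rightarrow> bool" where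
  "witness_upto n X C h \<longleftrightarrow> \<not> column C 2 h \<and> (\<forall>i<h. column C 2 i) \<and>
     (\<forall>j\<le>n. column C 2 j \<longleftrightarrow> j < h) \<and> (\<exists>a. column C 0 a) \<and> (\<exists>a. \<not> column C 0 a) \<and>
     ((\<forall>i\<le>n. X i \<longleftrightarrow> column C 0 i) \<or> (\<forall>i\<le>n. X i \<longleftrightarrow> column C 1 i)) \<and>
     (\<forall>j\<le>n. \<exists>v. prog_eval (cfst (cfst h)) (code_Cons j 0) v \<and> (column C 1 j \<longleftrightarrow> column C 0 v)) \<and>
     (\<forall>j\<le>n. \<exists>v. prog_eval (csnd (cfst h)) (code_Cons j 0) v \<and> (column C 0 j \<longleftrightarrow> column C 1 v))"

lemma join_witnessI:
  assumes "\<And>n. \<exists>h. witness_upto n X C h"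
  shows "join_witness X C"
proof -
  obtain hs where hs: "\<And>n. witness_upto n X C (hs n)"
    using assms by metis
  define h where "h = hs 0"
  have "hs n = h" for n
    using hs[of n] hs[of 0] unfolding witness_upto_def h_def by (metis linorder_neqE_nat)
  then have upto: "witness_upto n X C h" for n
    using hs by metis
  have "(\<forall>i. X i \<longleftrightarrow> column C 0 i) \<or> (\<forall>i. X i \<longleftrightarrow> column C 1 i)"
  proof (rule ccontr)
    assume "\<not> ?thesis"
    then obtain i1 i2 where "X i1 \<noteq> column C 0 i1" "X i2 \<noteq> column C 1 i2"
      by blast
    with upto[of "max i1 i2"] show False
      unfolding witness_upto_def by auto
  qed
  then have "X = column C 0 \<or> X = column C 1"
    by (auto simp: fun_eq_iff)
  with upto show ?thesis
    unfolding join_witness_def witness_upto_def reduces_via_def by (intro exI[of _ h]) blast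
qed

definition certified_upto :: "nat \<Rightarrow> nat \<Rightarrow> nat \<Rightarrow> (nat \<Rightarrow> bool) \<Rightarrow> nat \<Rightarrow> nat \<Rightarrow> bool" where
  "certified_upto e n m C k l \<longleftrightarrow> (\<forall>j\<le>n. \<exists>L<m. \<exists>v<m. 3 * v + 2 < m \<and>
     certificate e (code_Cons j 0) v L \<and> (column C k j \<longleftrightarrow> column C l v))"

definition bounded_witness :: "nat \<Rightarrow> nat \<Rightarrow> (nat \<Rightarrow> bool) \<Rightarrow> (nat \<Rightarrow> bool) \<Rightarrow> bool" where
  "bounded_witness n m X C \<longleftrightarrow> 3 * n + 2 < m \<and> (\<exists>h<m. 3 * h + 2 < m \<and>
     \<not> column C 2 h \<and> (\<forall>i<h. column C 2 i) \<and> (\<forall>j\<le>n. column C 2 j \<longleftrightarrow> j < h) \<and>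
     (\<exists>a<m. 3 * a < m \<and> column C 0 a) \<and> (\<exists>a<m. 3 * a < m \<and> \<not> column C 0 a) \<and>
     ((\<forall>i\<le>n. X i \<longleftrightarrow> column C 0 i) \<or> (\<forall>i\<le>n. X i \<longleftrightarrow> column C 1 i)) \<and>
     certified_upto (cfst (cfst h)) n m C 1 0 \<and> certified_upto (csnd (cfst h)) n m C 0 1)"

lemma certified_upto_mono: "certified_upto e n m C k l \<Longrightarrow> n' \<le> n \<Longrightarrow> certified_upto e n' m C k l"
  unfolding certified_upto_def by simp

lemma bounded_witness_mono:
  assumes "bounded_witness n m X C" "n' \<le> n"
  shows "bounded_witness n' m X C"
proof -
  from assms(1) obtain h where h: "h < m \<and> 3 * h + 2 < m \<and> \<not> column C 2 h \<and> (\<forall>i<h. column C 2 i) \<and>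
      (\<forall>j\<le>n. column C 2 j \<longleftrightarrow> j < h) \<and>
      (\<exists>a<m. 3 * a < m \<and> column C 0 a) \<and> (\<exists>a<m. 3 * a < m \<and> \<not> column C 0 a) \<and>
      ((\<forall>i\<le>n. X i \<longleftrightarrow> column C 0 i) \<or> (\<forall>i\<le>n. X i \<longleftrightarrow> column C 1 i)) \<and>
      certified_upto (cfst (cfst h)) n m C 1 0 \<and> certified_upto (csnd (cfst h)) n m C 0 1"
    and n: "3 * n + 2 < m"
    unfolding bounded_witness_def by blast
  show ?thesis
    unfolding bounded_witness_def
    by (rule conjI[OF _ exI[of _ h]]) (use h n assms(2) in \<open>auto intro: certified_upto_mono\<close>)
qed

lemma column_trunc: "column (trunc m C) k i \<longleftrightarrow> 3 * i + k < m \<and> column C k i"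
  by (simp add: column_def trunc_def)

lemma certified_upto_trunc:
  assumes "certified_upto e n m (trunc m C) k l" "k \<le> 2" "l \<le> 2" "3 * n + 2 < m"
  shows "\<forall>j\<le>n. \<exists>v. prog_eval e (code_Cons j 0) v \<and> (column C k j \<longleftrightarrow> column C l v)"
proof (intro allI impI)
  fix j
  assume "j \<le> n"
  with assms(1) obtain v L where "3 * v + 2 < m" "certificate e (code_Cons j 0) v L"
    "column (trunc m C) k j \<longleftrightarrow> column (trunc m C) l v"
    unfolding certified_upto_def by blast
  with \<open>j \<le> n\<close> assms(2-4) show "\<exists>v. prog_eval e (code_Cons j 0) v \<and> (column C k j \<longleftrightarrow> column C l v)"
    by (auto simp: column_trunc prog_eval_iff_certificate)
qed

lemma bounded_witness_trunc:
  assumes "bounded_witness n m (trunc m X) (trunc m C)"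
  shows "\<exists>h. witness_upto n X C h"
proof -
  from assms obtain h a1 a0 where "3 * n + 2 < m" "3 * h + 2 < m" "\<not> column (trunc m C) 2 h"
    "\<forall>i<h. column (trunc m C) 2 i" "\<forall>j\<le>n. column (trunc m C) 2 j \<longleftrightarrow> j < h"
    "column (trunc m C) 0 a1" "\<not> column (trunc m C) 0 a0" "3 * a0 < m"
    and cols: "(\<forall>i\<le>n. trunc m X i \<longleftrightarrow> column (trunc m C) 0 i) \<or>
      (\<forall>i\<le>n. trunc m X i \<longleftrightarrow> column (trunc m C) 1 i)"
    and certified: "certified_upto (cfst (cfst h)) n m (trunc m C) 1 0"
      "certified_upto (csnd (cfst h)) n m (trunc m C) 0 1"
    unfolding bounded_witness_def by blast
  moreover from this have "(\<forall>i\<le>n. X i \<longleftrightarrow> column C 0 i) \<or> (\<forall>i\<le>n. X i \<longleftrightarrow> column C 1 i)"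
    by (auto simp: column_trunc trunc_def)
  ultimately have "witness_upto n X C h"
    unfolding witness_upto_def using certified_upto_trunc[OF certified(1)] certified_upto_trunc[OF certified(2)]
    by (auto simp: column_trunc)
  then show ?thesis ..
qed

lemma certified_upto_eventually:
  assumes "reduces_via e (column C k) (column C l)" "k \<le> 2" "l \<le> 2"
  shows "\<forall>\<^sub>F m in sequentially. certified_upto e n m (trunc m C) k l"
proof -
  have "\<forall>\<^sub>F m in sequentially. \<exists>L<m. \<exists>v<m. 3 * v + 2 < m \<and> certificate e (code_Cons j 0) v L \<and>
      (column (trunc m C) k j \<longleftrightarrow> column (trunc m C) l v)" for j
  proof -
    obtain v L where vL: "certificate e (code_Cons j 0) v L" "column C k j \<longleftrightarrow> column C l v"
      using assms(1) unfolding reduces_via_def prog_eval_iff_certificate by blast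
    have "\<forall>\<^sub>F m in sequentially. L + 3 * v + 3 * j + 2 < m"
      by (rule eventually_gt_at_top)
    then show ?thesis
    proof (rule eventually_mono)
      fix m
      assume "L + 3 * v + 3 * j + 2 < m"
      with vL assms(2,3) show "\<exists>L<m. \<exists>v<m. 3 * v + 2 < m \<and> certificate e (code_Cons j 0) v L \<and>
          (column (trunc m C) k j \<longleftrightarrow> column (trunc m C) l v)"
        by (intro exI[of _ L] conjI exI[of _ v]) (auto simp: column_trunc)
    qed
  qed
  then have "\<forall>\<^sub>F m in sequentially. \<forall>j\<in>{..n}. \<exists>L<m. \<exists>v<m. 3 * v + 2 < m \<and>
      certificate e (code_Cons j 0) v L \<and> (column (trunc m C) k j \<longleftrightarrow> column (trunc m C) l v)"
    by (simp add: eventually_ball_finite)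
  then show ?thesis
    unfolding certified_upto_def by (rule eventually_mono) simp
qed

lemma join_witness_eventually_bounded:
  assumes "join_witness X C"
  shows "\<forall>\<^sub>F m in sequentially. bounded_witness n m (trunc m X) (trunc m C)"
proof -
  obtain h a1 a0 where h: "\<forall>i. column C 2 i \<longleftrightarrow> i < h" and a: "column C 0 a1" "\<not> column C 0 a0"
    and X: "X = column C 0 \<or> X = column C 1"
    and r: "reduces_via (cfst (cfst h)) (column C 1) (column C 0)"
      "reduces_via (csnd (cfst h)) (column C 0) (column C 1)"
    using assms unfolding join_witness_def by blast
  have "\<forall>\<^sub>F m in sequentially. 3 * (h + a1 + a0 + n) + 2 < m"
    by (rule eventually_gt_at_top)
  moreover have "\<forall>\<^sub>F m in sequentially. certified_upto (cfst (cfst h)) n m (trunc m C) 1 0"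
    "\<forall>\<^sub>F m in sequentially. certified_upto (csnd (cfst h)) n m (trunc m C) 0 1"
    using certified_upto_eventually[OF r(1)] certified_upto_eventually[OF r(2)] by simp_all
  ultimately show ?thesis
  proof eventually_elim
    case (elim m)
    then have small: "3 * h + 2 < m" "3 * a1 < m" "3 * a0 < m" "3 * n + 2 < m"
      by auto
    have col2: "\<forall>i<h. column (trunc m C) 2 i" "\<forall>j\<le>n. column (trunc m C) 2 j \<longleftrightarrow> j < h"
      using h small by (auto simp: column_trunc)
    have col0: "\<exists>a<m. 3 * a < m \<and> column (trunc m C) 0 a"
      using a small by (auto simp: column_trunc intro!: exI[of _ a1])
    have col0': "\<exists>a<m. 3 * a < m \<and> \<not> column (trunc m C) 0 a"
      using a small by (auto simp: column_trunc intro!: exI[of _ a0])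
    have cols: "(\<forall>i\<le>n. trunc m X i \<longleftrightarrow> column (trunc m C) 0 i) \<or>
        (\<forall>i\<le>n. trunc m X i \<longleftrightarrow> column (trunc m C) 1 i)"
      using X small by (auto simp: column_trunc trunc_def)
    show ?case
      unfolding bounded_witness_def
      by (rule conjI[OF _ exI[of _ h]])
        (use elim(2,3) small h col2 col0 col0' cols in \<open>simp_all add: column_trunc\<close>)
  qed
qed

definition join_matrix :: "nat \<Rightarrow> nat \<Rightarrow> nat \<Rightarrow> bool" where
  "join_matrix n a b \<longleftrightarrow> (\<exists>i<prefix_length a. prefix_member a i \<noteq> prefix_member b i) \<and>
     (bounded_witness n (prefix_length a) (prefix_member a) (prefix_member b) \<or>
      bounded_witness n (prefix_length a) (prefix_member b) (prefix_member a))"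

lemma join_matrix_prefix_code:
  "join_matrix n (prefix_code X m) (prefix_code Y m) \<longleftrightarrow> (\<exists>i<m. X i \<noteq> Y i) \<and>
     (bounded_witness n m (trunc m X) (trunc m Y) \<or> bounded_witness n m (trunc m Y) (trunc m X))"
  by (auto simp: join_matrix_def prefix_length_prefix_code prefix_member_prefix_code trunc_def)

lemma join_graph_iff_join_matrix:
  "(X, Y) \<in> join_graph \<longleftrightarrow> (\<forall>n. \<exists>m. join_matrix n (prefix_code X m) (prefix_code Y m))"
proof
  assume "(X, Y) \<in> join_graph"
  then obtain i0 where i0: "X i0 \<noteq> Y i0" and witness: "join_witness X Y \<or> join_witness Y X"
    unfolding join_graph_def by auto
  show "\<forall>n. \<exists>m. join_matrix n (prefix_code X m) (prefix_code Y m)"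
  proof
    fix n
    have "\<forall>\<^sub>F m in sequentially. i0 < m"
      by (rule eventually_gt_at_top)
    moreover have "\<forall>\<^sub>F m in sequentially.
        bounded_witness n m (trunc m X) (trunc m Y) \<or> bounded_witness n m (trunc m Y) (trunc m X)"
      using witness join_witness_eventually_bounded eventually_mono by (metis (no_types, lifting))
    ultimately have "\<forall>\<^sub>F m in sequentially. join_matrix n (prefix_code X m) (prefix_code Y m)"
      by eventually_elim (use i0 in \<open>auto simp: join_matrix_prefix_code\<close>)
    then show "\<exists>m. join_matrix n (prefix_code X m) (prefix_code Y m)"
      by (auto simp: eventually_sequentially)
  qed
next
  assume matrix: "\<forall>n. \<exists>m. join_matrix n (prefix_code X m) (prefix_code Y m)"
  then have "X \<noteq> Y"
    by (auto simp: join_matrix_prefix_code)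
  moreover have "join_witness X Y \<or> join_witness Y X"
  proof (rule ccontr)
    assume "\<not> (join_witness X Y \<or> join_witness Y X)"
    then obtain n1 n2 where "\<forall>h. \<not> witness_upto n1 X Y h" "\<forall>h. \<not> witness_upto n2 Y X h"
      using join_witnessI by metis
    moreover obtain m where "join_matrix (max n1 n2) (prefix_code X m) (prefix_code Y m)"
      using matrix by blast
    ultimately show False
      unfolding join_matrix_prefix_code
      by (metis bounded_witness_mono bounded_witness_trunc max.cobounded1 max.cobounded2)
  qed
  ultimately show "(X, Y) \<in> join_graph"
    unfolding join_graph_def by simp
qed

lemma Pi02_join_graph: "Pi02_pairs join_graph"
proof (rule Pi02_pairsI)
  show "decidable (\<lambda>p. join_matrix (cfst p) (cfst (csnd p)) (csnd (csnd p)))"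
    unfolding join_matrix_def bounded_witness_def certified_upto_def column_def
    by (intro computable_intros decidable_prefix_member computable_prefix_length decidable_certificate)
qed (rule join_graph_iff_join_matrix)

lemma simple_graph_join_graph: "simple_graph join_graph"
  unfolding simple_graph_def sym_def irrefl_def join_graph_def by auto

lemma m_equiv_singletons: "m_equiv (\<lambda>i. i = 1) (\<lambda>i. i = 2)"
  unfolding m_equiv_def
  by (intro conjI m_reducesI[where f="\<lambda>n. if n = 1 then 2 else 0"]
      m_reducesI[where f="\<lambda>n. if n = 2 then 1 else 0"] computable_intros) auto

lemma singletons_not_adjacent: "((\<lambda>i. i = 1), (\<lambda>i. i = 2)) \<notin> join_graph"
proof -
  have "\<not> join_witness X C" if "C = (\<lambda>i. i = 1) \<or> C = (\<lambda>i. i = 2)" for X C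
  proof -
    have "\<not> column C 0 a" for a
    proof -
      have "3 * a + 0 \<noteq> 1" "3 * a + 0 \<noteq> 2"
        by presburger+
      with that show ?thesis
        unfolding column_def by auto
    qed
    then show ?thesis
      unfolding join_witness_def by blast
  qed
  then show ?thesis
    unfolding join_graph_def by blast
qed

theorem theorem4p2:
  shows "Pi02_graphable_diam m_equiv 2"
  unfolding Pi02_graphable_diam_def
proof (intro exI[of _ join_graph] conjI)
  show "Pi02_pairs join_graph"
    by (rule Pi02_join_graph)
  show "simple_graph join_graph"
    by (rule simple_graph_join_graph)
  show rtrancl: "join_graph\<^sup>* = {(x, y). m_equiv x y}"
    by (rule join_graph_rtrancl)
  show "has_diameter join_graph 2"
  proof (rule has_diameter_2I)
    show "x = y \<or> (\<exists>z. (x, z) \<in> join_graph \<and> (z, y) \<in> join_graph)" if "(x, y) \<in> join_graph\<^sup>*" for x y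
      using that m_equiv_common_neighbour unfolding rtrancl by blast
    show "((\<lambda>i. i = 1), (\<lambda>i. i = 2)) \<in> join_graph\<^sup>*"
      unfolding rtrancl using m_equiv_singletons by simp
    show "(\<lambda>i::nat. i = 1) \<noteq> (\<lambda>i. i = 2)"
      by (metis numeral_eq_one_iff semiring_norm(85))
  qed (rule singletons_not_adjacent)
qed

end
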